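(* In $\mathrm{PSym}$, for every parking function $f$ of positive degree, $$\Delta_+(M_f)=\sum_{i\in\mathrm{GD}(f)}M_{{}^if}\otimes M_{f^i}.$$
   Context: $\mathrm{PBT}_n$: planar binary trees with $n+1$ leaves, numbered left to right; $\mathrm{Des}(t)=\{1\le i\le n-1:\text{the }(i+1)\text{-st leaf is a right child}\}$. For $\sigma\in S_n$, $\mathrm{Des}(\sigma)=\{i:\sigma(i)>\sigma(i+1)\}$, $\mathrm{Inv}(\sigma)=\{(i,j):i<j,\sigma(i)>\sigma(j)\}$. A parking function of degree $n$ is a pair $(\sigma,t)\in S_n\times\mathrm{PBT}_n$ with $\mathrm{Des}(t)\subseteq\mathrm{Des}(\sigma)$. Weak order $\sigma\le_w\tau$ iff $\mathrm{Inv}(\sigma)\subseteq\mathrm{Inv}(\tau)$; Tamari order $\le_T$: reflexive–transitive closure of replacing a subtree $x(A,y(B,C))$ by $x(y(A,B),C)$. Parking order: $(\sigma,s)\le_P(\tau,t)$ iff $\sigma\le_w\tau$ and $s\le_T t$. Splitting of binary trees: for $0\le i\le n$, with $P$ the path from the root to leaf $i+1$, ${}^it$ (resp. $t^i$) is obtained by deleting at each node of $P$ the child strictly to the right (resp. left) of the path with its subtree and contracting nodes with one child. For $f=(\sigma,t)$, ${}^if=(\mathrm{std}(\sigma(1)\cdots\sigma(i)),{}^it)$, $f^i=(\mathrm{std}(\sigma(i+1)\cdots\sigma(n)),t^i)$, where $\mathrm{std}$ replaces distinct letters by $1,2,\dots$ preserving relative order. $\mathrm{PSym}$ has basis $\{F_f\}$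 over parking functions with coproduct $\Delta(F_f)=\sum_{i=0}^nF_{{}^if}\otimes F_{f^i}$ and $\Delta_+(x)=\Delta(x)-x\otimes1-1\otimes x$ ($1$ = the degree-0 parking function). The monomial basis is defined by $F_f=\sum_{g\ge_P f}M_g$. Global descents: for $\sigma\in S_n$, $\mathrm{GD}(\sigma)=\{i\in[n-1]:\sigma(a)>\sigma(b)\text{ for all }a\le i<b\}$; for $t\in\mathrm{PBT}_n$, $\mathrm{GD}(t)=\{i\in[n-1]: t=s/r,\ \deg s=i\}$ where $s/r$ identifies the root of $s$ with the leftmost leaf of $r$; for $f=(\sigma,t)$, $\mathrm{GD}(f)=\mathrm{GD}(\sigma)\cap\mathrm{GD}(t)$. *)

theory Defs
  imports Main
begin

datatype bt = Leaf | Node bt bt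

fun deg :: "bt \<Rightarrow> nat" where
  "deg Leaf = 0"
| "deg (Node l r) = Suc (deg l + deg r)"

fun nleaves :: "bt \<Rightarrow> nat" where
  "nleaves Leaf = 1"
| "nleaves (Node l r) = nleaves l + nleaves r"

text \<open>For each leaf (left to right), whether it is a right child (the root-leaf of the
  trivial tree is declared not a right child).\<close>
fun leaf_right :: "bool \<Rightarrow> bt \<Rightarrow> bool list" where
  "leaf_right b Leaf = [b]"
| "leaf_right b (Node l r) = leaf_right False l @ leaf_right True r"

text \<open>Des(t) = {1 \<le> i \<le> n-1 : the (i+1)-st leaf is a right child}; the (i+1)-st leaf has
  0-based position i.\<close>
definition DesT :: "bt \<Rightarrow> nat set" where
  "DesT t = {i. 1 \<le> i \<and> i \<le> deg t - 1 \<and> leaf_right False t ! i}"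

inductive rot :: "bt \<Rightarrow> bt \<Rightarrow> bool" where
  root: "rot (Node A (Node B C)) (Node (Node A B) C)"
| left: "rot l l' \<Longrightarrow> rot (Node l r) (Node l' r)"
| right: "rot r r' \<Longrightarrow> rot (Node l r) (Node l r')"

definition tamari_le :: "bt \<Rightarrow> bt \<Rightarrow> bool" where
  "tamari_le = rot\<^sup>*\<^sup>*"

text \<open>Splitting along the path from the root to the leaf with 0-based position i
  (the (i+1)-st leaf). lsplit deletes children strictly right of the path,
  rsplit deletes children strictly left of the path, contracting unary nodes.\<close>
fun lsplit :: "nat \<Rightarrow> bt \<Rightarrow> bt" where
  "lsplit i Leaf = Leaf"
| "lsplit i (Node l r) =
     (if i < nleaves l then lsplit i l else Node l (lsplit (i - nleaves l) r))"

fun rsplit :: "nat \<Rightarrow> bt \<Rightarrow> bt" where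
  "rsplit i Leaf = Leaf"
| "rsplit i (Node l r) =
     (if i < nleaves l then Node (rsplit i l) r else rsplit (i - nleaves l) r)"

fun graft :: "bt \<Rightarrow> bt \<Rightarrow> bt" where
  "graft s Leaf = s"
| "graft s (Node l r) = Node (graft s l) r"

definition GDT :: "bt \<Rightarrow> nat set" where
  "GDT t = {i. 1 \<le> i \<and> i \<le> deg t - 1 \<and> (\<exists>s r. t = graft s r \<and> deg s = i)}"

text \<open>A permutation \<sigma> of [n] is the word \<sigma>(1)...\<sigma>(n); position k (1-based) is
  index k-1 of the list.\<close>
definition is_perm :: "nat \<Rightarrow> nat list \<Rightarrow> bool" where
  "is_perm n xs \<longleftrightarrow> length xs = n \<and> set xs = {1..n} \<and> distinct xs"

definition DesP :: "nat list \<Rightarrow> nat set" where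
  "DesP xs = {i. 1 \<le> i \<and> i < length xs \<and> xs ! (i - 1) > xs ! i}"

text \<open>Inversions as 1-based position pairs.\<close>
definition Inv :: "nat list \<Rightarrow> (nat \<times> nat) set" where
  "Inv xs = {(i, j). 1 \<le> i \<and> i < j \<and> j \<le> length xs \<and> xs ! (i - 1) > xs ! (j - 1)}"

definition weak_le :: "nat list \<Rightarrow> nat list \<Rightarrow> bool" where
  "weak_le xs ys \<longleftrightarrow> Inv xs \<subseteq> Inv ys"

definition std :: "nat list \<Rightarrow> nat list" where
  "std xs = map (\<lambda>x. card {y \<in> set xs. y \<le> x}) xs"

definition GDP :: "nat list \<Rightarrow> nat set" where
  "GDP xs = {i. 1 \<le> i \<and> i \<le> length xs - 1 \<and>
     (\<forall>a b. 1 \<le> a \<and> a \<le> i \<and> i < b \<and> b \<le> length xs \<longrightarrow> xs ! (a - 1) > xs ! (b - 1))}"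

type_synonym pf = "nat list \<times> bt"

definition pdeg :: "pf \<Rightarrow> nat" where
  "pdeg f = deg (snd f)"

definition is_pf :: "pf \<Rightarrow> bool" where
  "is_pf f \<longleftrightarrow> is_perm (deg (snd f)) (fst f) \<and> DesT (snd f) \<subseteq> DesP (fst f)"

definition park_le :: "pf \<Rightarrow> pf \<Rightarrow> bool" where
  "park_le f g \<longleftrightarrow> weak_le (fst f) (fst g) \<and> tamari_le (snd f) (snd g)"

definition lsplit_pf :: "nat \<Rightarrow> pf \<Rightarrow> pf" where
  "lsplit_pf i f = (std (take i (fst f)), lsplit i (snd f))"

definition rsplit_pf :: "nat \<Rightarrow> pf \<Rightarrow> pf" where
  "rsplit_pf i f = (std (drop i (fst f)), rsplit i (snd f))"

definition GD :: "pf \<Rightarrow> nat set" where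
  "GD f = GDP (fst f) \<inter> GDT (snd f)"

definition unit_pf :: pf where
  "unit_pf = ([], Leaf)"

text \<open>Elements of PSym are represented by their coefficient functions in the
  fundamental basis {F_f} (supported on parking functions); elements of
  PSym \<otimes> PSym by coefficient functions in the basis {F_g \<otimes> F_h}.\<close>
type_synonym psym = "pf \<Rightarrow> int"
type_synonym psym2 = "pf \<times> pf \<Rightarrow> int"

definition Fb :: "pf \<Rightarrow> psym" where
  "Fb f = (\<lambda>g. if g = f then 1 else 0)"

definition tensor :: "psym \<Rightarrow> psym \<Rightarrow> psym2" where
  "tensor x y = (\<lambda>(g, h). x g * y h)"

text \<open>Coproduct, extended linearly from Delta(F_f) = sum_{i=0}^n F_{^i f} \<otimes> F_{f^i}.
  Since ^i f has degree i and f^i degree n-i, the coefficient of F_g \<otimes> F_h only involves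
  parking functions of degree deg g + deg h.\<close>
definition Delta :: "psym \<Rightarrow> psym2" where
  "Delta x = (\<lambda>(g, h). \<Sum>f \<in> {f. is_pf f \<and> pdeg f = pdeg g + pdeg h}.
      x f * int (card {i. i \<le> pdeg f \<and> lsplit_pf i f = g \<and> rsplit_pf i f = h}))"

definition Delta_plus :: "psym \<Rightarrow> psym2" where
  "Delta_plus x = (\<lambda>p. Delta x p - tensor x (Fb unit_pf) p - tensor (Fb unit_pf) x p)"

definition Mb :: "pf \<Rightarrow> psym" where
  "Mb = (THE M. (\<forall>f. \<not> is_pf f \<longrightarrow> M f = (\<lambda>_. 0)) \<and>
      (\<forall>f. is_pf f \<longrightarrow> Fb f = (\<lambda>h. \<Sum>g \<in> {g. is_pf g \<and> park_le f g}. M g h)))"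

end

theory Submission
  imports Defs
begin

text \<open>Since F_f is the sum of M_g over g \<ge>_P f and the parking order is a finite
  partial order, M is determined by Moebius inversion; so it suffices to show that
  R_g = (sum over i in GD(g) of M_{^i g} \<otimes> M_{g^i}) satisfies the same inversion
  relation as Delta_+(M_g), i.e. that the sum of R_g over g \<ge>_P f equals
  Delta_+(F_f) = (sum over 0 < i < n of F_{^i f} \<otimes> F_{f^i}).
  Exchanging the sums, for fixed i the map g \<mapsto> (^i g, g^i) is a bijection from
  {g \<ge>_P f : i \<in> GD(g)} onto {u \<ge>_P ^i f} \<times> {v \<ge>_P f^i}: its inverse shifts the
  word of u above that of v and grafts the trees, and comparability of the halves
  lifts to comparability of the joins because splitting at i is monotone and every
  tree lies below the graft of its two halves in the Tamari order. Hence the i-th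
  summand is F_{^i f} \<otimes> F_{f^i}.\<close>

section \<open>Binary trees: leaves, splitting and grafting\<close>

lemma nleaves_eq_Suc_deg: "nleaves t = Suc (deg t)"
  by (induction t) auto

lemma length_leaf_right [simp]: "length (leaf_right b t) = nleaves t"
  by (induction t arbitrary: b) auto

lemma leaf_right_not_Nil: "leaf_right b t \<noteq> []"
  by (metis length_leaf_right nleaves_eq_Suc_deg list.size(3) Zero_not_Suc)

lemma leaf_right_nth_flag: "0 < k \<Longrightarrow> leaf_right b t ! k = leaf_right c t ! k"
  by (cases t) auto

lemma leaf_right_nth_0: "t \<noteq> Leaf \<Longrightarrow> \<not> leaf_right b t ! 0"
proof (induction t arbitrary: b)
  case (Node l r)
  then show ?case
    by (cases l) (auto simp: nth_append nleaves_eq_Suc_deg)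
qed simp

lemma deg_lsplit: "i < nleaves t \<Longrightarrow> deg (lsplit i t) = i"
  by (induction i t rule: lsplit.induct) (auto simp: nleaves_eq_Suc_deg)

lemma deg_rsplit: "i < nleaves t \<Longrightarrow> deg (rsplit i t) = deg t - i"
  by (induction i t rule: rsplit.induct) (auto simp: nleaves_eq_Suc_deg)

lemma lsplit_0: "lsplit 0 t = Leaf"
  by (induction t) (auto simp: nleaves_eq_Suc_deg)

lemma rsplit_0: "rsplit 0 t = t"
  by (induction t) (auto simp: nleaves_eq_Suc_deg)

lemma lsplit_deg: "lsplit (deg t) t = t"
  by (induction t) (auto simp: nleaves_eq_Suc_deg)

lemma rsplit_deg: "rsplit (deg t) t = Leaf"
  by (induction t) (auto simp: nleaves_eq_Suc_deg)

lemma leaf_right_lsplit: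
  "i < nleaves t \<Longrightarrow> k < i \<Longrightarrow> leaf_right b (lsplit i t) ! k = leaf_right b t ! k"
proof (induction i t arbitrary: b k rule: lsplit.induct)
  case (2 i l r)
  show ?case
  proof (cases "i < nleaves l")
    case True
    have "l \<noteq> Leaf" using True 2(4) by (cases l) auto
    then have "leaf_right b l ! k = leaf_right False l ! k"
      by (cases "k = 0") (simp_all add: leaf_right_nth_0 leaf_right_nth_flag[of k b l False])
    with True 2 show ?thesis by (auto simp: nth_append)
  next
    case False
    define j where "j = i - nleaves l"
    have j: "j < nleaves r" using 2(3) False by (auto simp: j_def)
    have "leaf_right True (lsplit j r) ! (k - nleaves l) = leaf_right True r ! (k - nleaves l)"
      if "nleaves l \<le> k"
    proof (cases "k = nleaves l")
      case True
      then have "0 < j" using 2(4) by (simp add: j_def)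
      then have "lsplit j r \<noteq> Leaf" "r \<noteq> Leaf"
        using j deg_lsplit[of j r] by (auto simp: nleaves_eq_Suc_deg)
      then show ?thesis using True by (simp add: leaf_right_nth_0)
    next
      case False
      then show ?thesis using 2(2)[of "k - nleaves l" True] \<open>\<not> i < nleaves l\<close> j that 2(4)
        by (simp add: j_def)
    qed
    then show ?thesis using False by (auto simp: nth_append j_def)
  qed
qed simp

lemma leaf_right_rsplit:
  "k + i < nleaves t \<Longrightarrow> 0 < k \<Longrightarrow> leaf_right b (rsplit i t) ! k = leaf_right b t ! (k + i)"
proof (induction i t arbitrary: b k rule: rsplit.induct)
  case (2 i l r)
  show ?case
  proof (cases "i < nleaves l")
    case True
    then have "nleaves (rsplit i l) = nleaves l - i"
      using deg_rsplit[of i l] by (simp add: nleaves_eq_Suc_deg)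
    with True 2(1)[of k False] 2(3,4) show ?thesis by (auto simp: nth_append)
  next
    case False
    then show ?thesis
      using 2(2)[of k b] 2(3,4) leaf_right_nth_flag[of "k + i - nleaves l" b r True]
      by (auto simp: nth_append)
  qed
qed simp

lemma leaf_right_graft:
  "leaf_right False (graft s r) = leaf_right False s @ tl (leaf_right False r)"
proof (induction r)
  case (Node l r)
  then show ?case
    using leaf_right_not_Nil[of False l] by (cases "leaf_right False l") auto
qed simp

lemma deg_graft: "deg (graft s r) = deg s + deg r"
  by (induction r) auto

lemma lsplit_graft: "lsplit (deg s) (graft s r) = s"
  by (induction r) (auto simp: nleaves_eq_Suc_deg deg_graft lsplit_deg)

lemma rsplit_graft: "rsplit (deg s) (graft s r) = r"
  by (induction r) (auto simp: nleaves_eq_Suc_deg deg_graft rsplit_deg)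

lemma DesT_lsplit: "i < nleaves t \<Longrightarrow> DesT (lsplit i t) \<subseteq> {k \<in> DesT t. k < i}"
  using leaf_right_lsplit by (auto simp: DesT_def deg_lsplit nleaves_eq_Suc_deg)

lemma DesT_rsplit: "i < nleaves t \<Longrightarrow> k \<in> DesT (rsplit i t) \<Longrightarrow> k + i \<in> DesT t"
  using leaf_right_rsplit[of k i t False] by (auto simp: DesT_def deg_rsplit nleaves_eq_Suc_deg)

lemma DesT_graft: "DesT (graft s r) \<subseteq> DesT s \<union> {deg s} \<union> (\<lambda>k. k + deg s) ` DesT r"
proof
  fix k assume "k \<in> DesT (graft s r)"
  then have k: "1 \<le> k" "k < deg s + deg r" and lr: "leaf_right False (graft s r) ! k"
    by (auto simp: DesT_def deg_graft)
  consider "k < deg s" | "k = deg s" | "deg s < k" by linarith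
  then show "k \<in> DesT s \<union> {deg s} \<union> (\<lambda>k. k + deg s) ` DesT r"
  proof cases
    case 1
    then have "leaf_right False s ! k"
      using lr by (simp add: leaf_right_graft nth_append nleaves_eq_Suc_deg)
    then have "k \<in> DesT s" using 1 k by (simp add: DesT_def)
    then show ?thesis by blast
  next
    case 3
    have "tl (leaf_right False r) ! (k - Suc (deg s)) = leaf_right False r ! (k - deg s)"
      using 3 leaf_right_not_Nil[of False r] by (cases "leaf_right False r") (auto simp: Suc_diff_Suc)
    then have "k - deg s \<in> DesT r"
      using lr k 3 by (auto simp: DesT_def leaf_right_graft nth_append nleaves_eq_Suc_deg)
    then show ?thesis using 3 by (auto intro: image_eqI[where x = "k - deg s"])
  qed simp
qed

section \<open>The Tamari order\<close>

lemma rot_deg: "rot s t \<Longrightarrow> deg s = deg t"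
  by (induction rule: rot.induct) auto

lemma tamari_deg: "tamari_le s t \<Longrightarrow> deg s = deg t"
  unfolding tamari_le_def by (induction rule: rtranclp_induct) (auto dest: rot_deg)

lemma tamari_refl: "tamari_le s s"
  by (simp add: tamari_le_def)

lemma tamari_trans [trans]: "tamari_le s t \<Longrightarrow> tamari_le t u \<Longrightarrow> tamari_le s u"
  by (simp add: tamari_le_def)

lemma tamari_if_rot: "rot s t \<Longrightarrow> tamari_le s t"
  by (simp add: tamari_le_def)

lemma tamari_Node_left: "tamari_le l l' \<Longrightarrow> tamari_le (Node l r) (Node l' r)"
  unfolding tamari_le_def
  by (induction rule: rtranclp_induct) (auto intro: rtranclp.rtrancl_into_rtrancl rot.left)

lemma tamari_Node_right: "tamari_le r r' \<Longrightarrow> tamari_le (Node l r) (Node l r')"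
  unfolding tamari_le_def
  by (induction rule: rtranclp_induct) (auto intro: rtranclp.rtrancl_into_rtrancl rot.right)

text \<open>A rotation raises the sum over all nodes of the number of leaves of the left
  subtree, so the Tamari preorder is antisymmetric.\<close>

fun left_weight :: "bt \<Rightarrow> nat" where
  "left_weight Leaf = 0"
| "left_weight (Node l r) = nleaves l + left_weight l + left_weight r"

lemma left_weight_rot: "rot s t \<Longrightarrow> left_weight s < left_weight t"
  by (induction rule: rot.induct) (auto simp: rot_deg nleaves_eq_Suc_deg)

lemma tamari_antisym:
  assumes "tamari_le s t" and "tamari_le t s"
  shows "s = t"
proof -
  have weight: "s = t \<or> left_weight s < left_weight t" if "tamari_le s t" for s t
    using that unfolding tamari_le_def
    by (induction rule: rtranclp_induct) (auto dest: left_weight_rot)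
  show ?thesis using weight[OF assms(1)] weight[OF assms(2)] by auto
qed

lemma rot_nleaves: "rot s t \<Longrightarrow> nleaves s = nleaves t"
  by (induction rule: rot.induct) auto

lemma tamari_lsplit:
  assumes "tamari_le s t"
  shows "tamari_le (lsplit i s) (lsplit i t)"
proof -
  have step: "tamari_le (lsplit i s) (lsplit i t)" if "rot s t" for s t
    using that
  proof (induction arbitrary: i rule: rot.induct)
    case (left l l' r)
    then show ?case by (auto simp: rot_nleaves tamari_refl intro!: tamari_if_rot rot.left)
  next
    case (right r r' l)
    then show ?case by (auto simp: rot_nleaves tamari_refl intro!: tamari_Node_right)
  qed (auto simp: tamari_refl intro!: tamari_if_rot rot.root)
  show ?thesis
    using assms unfolding tamari_le_def
    by (induction rule: rtranclp_induct) (auto dest!: step simp: tamari_le_def)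
qed

lemma tamari_rsplit:
  assumes "tamari_le s t"
  shows "tamari_le (rsplit i s) (rsplit i t)"
proof -
  have step: "tamari_le (rsplit i s) (rsplit i t)" if "rot s t" for s t
    using that
  proof (induction arbitrary: i rule: rot.induct)
    case (left l l' r)
    then show ?case by (auto simp: rot_nleaves tamari_refl intro!: tamari_Node_left)
  next
    case (right r r' l)
    then show ?case by (auto simp: rot_nleaves tamari_refl intro!: tamari_if_rot rot.right)
  qed (auto simp: tamari_refl intro!: tamari_if_rot rot.root)
  show ?thesis
    using assms unfolding tamari_le_def
    by (induction rule: rtranclp_induct) (auto dest!: step simp: tamari_le_def)
qed

lemma tamari_graft:
  assumes "tamari_le s s'" and "tamari_le r r'"
  shows "tamari_le (graft s r) (graft s' r')"
proof -
  have rot_graft: "rot (graft s' y) (graft s' z)" if "rot y z" for y z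
    using that by (induction rule: rot.induct) (auto intro: rot.intros)
  have "tamari_le (graft s r) (graft s' r)"
    using assms(1) by (induction r) (auto intro: tamari_Node_left)
  also have "tamari_le (graft s' r) (graft s' r')"
    using assms(2) unfolding tamari_le_def
    by (induction rule: rtranclp_induct) (auto intro: rtranclp.rtrancl_into_rtrancl rot_graft)
  finally show ?thesis .
qed

lemma tamari_Node_graft: "tamari_le (Node l (graft s r)) (graft (Node l s) r)"
proof (induction r)
  case (Node r1 r2)
  have "tamari_le (Node l (Node (graft s r1) r2)) (Node (Node l (graft s r1)) r2)"
    by (intro tamari_if_rot rot.root)
  also have "tamari_le \<dots> (Node (graft (Node l s) r1) r2)"
    by (intro tamari_Node_left Node)
  finally show ?case by simp
qed (simp add: tamari_refl)

lemma tamari_graft_split: "i < nleaves t \<Longrightarrow> tamari_le t (graft (lsplit i t) (rsplit i t))"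
proof (induction i t rule: lsplit.induct)
  case (2 i l r)
  show ?case
  proof (cases "i < nleaves l")
    case True
    then show ?thesis using 2(1) by (simp add: tamari_Node_left)
  next
    case False
    define j where "j = i - nleaves l"
    have "tamari_le (Node l r) (Node l (graft (lsplit j r) (rsplit j r)))"
      using 2(2) 2(3) False by (simp add: tamari_Node_right j_def)
    also have "tamari_le \<dots> (graft (Node l (lsplit j r)) (rsplit j r))"
      by (rule tamari_Node_graft)
    finally show ?thesis using False by (simp add: j_def)
  qed
qed (simp add: tamari_refl)

lemma finite_deg_eq: "finite {t. deg t = n}"
proof -
  have "finite {t. deg t \<le> n}"
  proof (induction n)
    case 0
    have "{t. deg t \<le> 0} = {Leaf}" by (auto elim: deg.elims)
    then show ?case by simp
  next
    case (Suc n)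
    have "{t. deg t \<le> Suc n} \<subseteq> insert Leaf (case_prod Node ` ({t. deg t \<le> n} \<times> {t. deg t \<le> n}))"
      by (rule subsetI, case_tac x) auto
    then show ?case using Suc by (meson finite_SigmaI finite_imageI finite_insert finite_subset)
  qed
  then show ?thesis by (rule finite_subset[rotated]) auto
qed

section \<open>Words, standardization and the weak order\<close>

definition std_rank :: "nat list \<Rightarrow> nat \<Rightarrow> nat" where
  "std_rank xs x = card {y \<in> set xs. y \<le> x}"

lemma std_eq_map_rank: "std xs = map (std_rank xs) xs"
  by (simp add: std_def std_rank_def)

lemma length_std [simp]: "length (std xs) = length xs"
  by (simp add: std_def)

lemma nth_std: "k < length xs \<Longrightarrow> std xs ! k = std_rank xs (xs ! k)"
  by (simp add: std_eq_map_rank)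

lemma std_rank_strict_mono:
  assumes "x \<in> set xs" "y \<in> set xs" "x < y"
  shows "std_rank xs x < std_rank xs y"
proof -
  have "card (insert y {z \<in> set xs. z \<le> x}) \<le> card {z \<in> set xs. z \<le> y}"
    using assms by (intro card_mono) auto
  then show ?thesis using assms by (simp add: std_rank_def)
qed

lemma std_rank_less_iff:
  "x \<in> set xs \<Longrightarrow> y \<in> set xs \<Longrightarrow> std_rank xs x < std_rank xs y \<longleftrightarrow> x < y"
  by (metis std_rank_strict_mono linorder_neq_iff order_less_asym)

lemma is_perm_std:
  assumes "distinct xs"
  shows "is_perm (length xs) (std xs)"
proof -
  have inj: "inj_on (std_rank xs) (set xs)"
    by (rule inj_onI) (metis std_rank_strict_mono linorder_neq_iff order_less_irrefl)
  have "1 \<le> std_rank xs x \<and> std_rank xs x \<le> card (set xs)" if "x \<in> set xs" for x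
    using that by (auto simp: std_rank_def intro!: card_mono Suc_leI card_gt_0_iff[THEN iffD2])
  then have "std_rank xs ` set xs \<subseteq> {1..length xs}"
    using distinct_card[OF assms] by fastforce
  moreover have "card (std_rank xs ` set xs) = card {1..length xs}"
    using card_image[OF inj] distinct_card[OF assms] by simp
  ultimately have "std_rank xs ` set xs = {1..length xs}"
    by (simp add: card_subset_eq)
  then show ?thesis
    using assms inj by (simp add: is_perm_def std_eq_map_rank distinct_map)
qed

lemma Inv_std: "Inv (std xs) = Inv xs"
  by (auto simp: Inv_def nth_std std_rank_less_iff)

lemma DesP_std: "DesP (std xs) = DesP xs"
  by (auto simp: DesP_def nth_std std_rank_less_iff)

lemma std_rank_perm: "is_perm n xs \<Longrightarrow> x \<in> set xs \<Longrightarrow> std_rank xs x = x"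
  unfolding is_perm_def std_rank_def
  by (auto simp: Collect_conj_eq[symmetric] intro: arg_cong[where f = card, of _ "{1..x}", simplified])

lemma std_perm: "is_perm n xs \<Longrightarrow> std xs = xs"
  by (simp add: std_eq_map_rank std_rank_perm map_idI)

lemma std_rank_shift: "std_rank (map (\<lambda>y. y + m) xs) (x + m) = std_rank xs x"
proof -
  have "{y \<in> set (map (\<lambda>y. y + m) xs). y \<le> x + m} = (\<lambda>y. y + m) ` {y \<in> set xs. y \<le> x}"
    by auto
  then show ?thesis unfolding std_rank_def by (simp add: card_image inj_on_def)
qed

lemma std_shift: "std (map (\<lambda>y. y + m) xs) = std xs"
  by (simp add: std_eq_map_rank std_rank_shift)

lemma Inv_take: "Inv (take i xs) = {(a, b). (a, b) \<in> Inv xs \<and> b \<le> i}"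
  unfolding Inv_def by auto

lemma Inv_drop: "(a, b) \<in> Inv (drop i xs) \<longleftrightarrow> 1 \<le> a \<and> (a + i, b + i) \<in> Inv xs"
  unfolding Inv_def by (auto simp: add.commute add.left_commute)

lemma DesP_take: "DesP (take i xs) = {k \<in> DesP xs. k < i}"
  unfolding DesP_def by auto

lemma DesP_drop: "k \<in> DesP (drop i xs) \<longleftrightarrow> 1 \<le> k \<and> k + i \<in> DesP xs"
  unfolding DesP_def by (auto simp: add.commute add.left_commute)

text \<open>A permutation is determined by its inversion set: the value at position k is
  the number of positions whose value does not exceed it, and comparisons of values
  are read off the inversions.\<close>

lemma perm_nth_eq_card:
  assumes "is_perm n xs" and "k < n"
  shows "xs ! k = card {j. j < n \<and> xs ! j \<le> xs ! k}"
proof -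
  have len: "length xs = n" and "distinct xs" using assms(1) by (auto simp: is_perm_def)
  have "{y \<in> set xs. y \<le> xs ! k} = (!) xs ` {j. j < n \<and> xs ! j \<le> xs ! k}"
    using len by (auto simp: in_set_conv_nth)
  moreover have "inj_on ((!) xs) {j. j < n \<and> xs ! j \<le> xs ! k}"
    using \<open>distinct xs\<close> len by (auto simp: inj_on_def nth_eq_iff_index_eq)
  ultimately show ?thesis
    using std_rank_perm[OF assms(1), of "xs ! k"] assms len by (simp add: std_rank_def card_image)
qed

lemma perm_nth_le_iff_Inv:
  assumes "is_perm n xs" and "j < n" and "k < n"
  shows "xs ! j \<le> xs ! k \<longleftrightarrow>
    j = k \<or> (j < k \<and> (Suc j, Suc k) \<notin> Inv xs) \<or> (k < j \<and> (Suc k, Suc j) \<in> Inv xs)"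
proof -
  have len: "length xs = n" and "distinct xs" using assms(1) by (auto simp: is_perm_def)
  then have "j \<noteq> k \<Longrightarrow> xs ! j \<noteq> xs ! k" using assms(2,3) by (simp add: nth_eq_iff_index_eq)
  then show ?thesis using len assms(2,3) unfolding Inv_def by (cases j k rule: linorder_cases) auto
qed

lemma perm_eq_if_Inv_eq:
  assumes "is_perm n xs" "is_perm n ys" "Inv xs = Inv ys"
  shows "xs = ys"
proof (rule nth_equalityI)
  show "length xs = length ys" using assms by (simp add: is_perm_def)
  fix k assume "k < length xs"
  then have k: "k < n" using assms by (simp add: is_perm_def)
  have "{j. j < n \<and> xs ! j \<le> xs ! k} = {j. j < n \<and> ys ! j \<le> ys ! k}"
    using perm_nth_le_iff_Inv[OF assms(1) _ k] perm_nth_le_iff_Inv[OF assms(2) _ k] assms(3)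
    by auto
  then show "xs ! k = ys ! k"
    using perm_nth_eq_card[OF assms(1) k] perm_nth_eq_card[OF assms(2) k] by simp
qed

lemma Inv_subset_if_GDP:
  assumes "length xs = length ys" and "i \<in> GDP ys"
    and "Inv (take i xs) \<subseteq> Inv (take i ys)" and "Inv (drop i xs) \<subseteq> Inv (drop i ys)"
  shows "Inv xs \<subseteq> Inv ys"
proof
  fix p assume p: "p \<in> Inv xs"
  then obtain a b where ab: "p = (a, b)" "1 \<le> a" "a < b" "b \<le> length xs"
    by (auto simp: Inv_def)
  consider "b \<le> i" | "i < a" | "a \<le> i" "i < b" by linarith
  then show "p \<in> Inv ys"
  proof cases
    case 1
    then show ?thesis using assms(3) p ab by (auto simp: Inv_take)
  next
    case 2
    then have "(a - i, b - i) \<in> Inv (drop i xs)" using p ab by (simp add: Inv_drop)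
    then have "(a - i, b - i) \<in> Inv (drop i ys)" using assms(4) by blast
    then show ?thesis using 2 ab by (simp add: Inv_drop)
  next
    case 3
    then show ?thesis using assms(1,2) ab by (auto simp: GDP_def Inv_def)
  qed
qed

lemma GDP_decompose:
  assumes p: "is_perm n xs" and g: "i \<in> GDP xs"
  shows "std (drop i xs) = drop i xs"
    and "map (\<lambda>x. x + (n - i)) (std (take i xs)) @ std (drop i xs) = xs"
proof -
  let ?A = "set (take i xs)" and ?B = "set (drop i xs)"
  have len: "length xs = n" and d: "distinct xs" using p by (auto simp: is_perm_def)
  have AB: "y < x" if x: "x \<in> ?A" and y: "y \<in> ?B" for x y
  proof -
    obtain q where q: "q < i" "x = xs ! q"
      using x by (auto simp: in_set_conv_nth)
    obtain r where "r < length (drop i xs)" "y = drop i xs ! r"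
      using y unfolding in_set_conv_nth by blast
    then have r: "i + r < n" "y = xs ! (i + r)" using len by auto
    have "\<forall>a b. 1 \<le> a \<and> a \<le> i \<and> i < b \<and> b \<le> n \<longrightarrow> xs ! (a - 1) > xs ! (b - 1)"
      using g len unfolding GDP_def by blast
    from this[rule_format, of "Suc q" "Suc (i + r)"] show ?thesis using q r by simp
  qed
  have un: "set xs = ?A \<union> ?B" by (metis append_take_drop_id set_append)
  have dis: "?A \<inter> ?B = {}" using d by (metis append_take_drop_id distinct_append)
  have rank_B: "std_rank (drop i xs) y = y" if "y \<in> ?B" for y
  proof -
    have "{z \<in> ?B. z \<le> y} = {z \<in> set xs. z \<le> y}" using un AB that by fastforce
    then show ?thesis using std_rank_perm[OF p, of y] that un unfolding std_rank_def by auto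
  qed
  show drop: "std (drop i xs) = drop i xs" by (simp add: std_eq_map_rank rank_B map_idI)
  have rank_A: "std_rank (take i xs) x + (n - i) = x" if "x \<in> ?A" for x
  proof -
    have "{z \<in> set xs. z \<le> x} = {z \<in> ?A. z \<le> x} \<union> ?B" using un AB that by fastforce
    then have "card {z \<in> set xs. z \<le> x} = card {z \<in> ?A. z \<le> x} + card ?B"
      using dis by (auto intro: card_Un_disjoint)
    then show ?thesis
      using std_rank_perm[OF p, of x] that un d len by (auto simp: std_rank_def distinct_card)
  qed
  have "map (\<lambda>x. x + (n - i)) (std (take i xs)) = take i xs"
    by (simp add: std_eq_map_rank rank_A map_idI)
  then show "map (\<lambda>x. x + (n - i)) (std (take i xs)) @ std (drop i xs) = xs"
    using drop by simp
qed

lemma is_perm_shift_append: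
  assumes "is_perm i a" "is_perm m b"
  shows "is_perm (i + m) (map (\<lambda>x. x + m) a @ b)"
proof -
  have "(\<lambda>x. x + m) ` {1..i} = {m + 1..m + i}"
    by (auto simp: image_iff intro!: bexI[where x = "_ - m"])
  then show ?thesis using assms by (auto simp: is_perm_def distinct_map inj_on_def)
qed

lemma shift_append_nth_less:
  assumes "is_perm i a" "is_perm m b" "1 \<le> p" "p \<le> i" "i < q" "q \<le> i + m"
  shows "(map (\<lambda>x. x + m) a @ b) ! (q - 1) < (map (\<lambda>x. x + m) a @ b) ! (p - 1)"
proof -
  have "1 \<le> a ! (p - 1)"
    using assms nth_mem[of "p - 1" a] by (auto simp: is_perm_def)
  moreover have "b ! (q - 1 - i) \<le> m"
    using assms nth_mem[of "q - 1 - i" b] by (auto simp: is_perm_def)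
  ultimately show ?thesis using assms by (auto simp: is_perm_def nth_append)
qed

lemma GDP_shift_append:
  assumes "is_perm i a" "is_perm m b" "0 < i" "0 < m"
  shows "i \<in> GDP (map (\<lambda>x. x + m) a @ b)"
  using assms shift_append_nth_less[OF assms(1,2)] by (auto simp: GDP_def is_perm_def)

lemma DesP_shift_append:
  assumes "is_perm i a" "is_perm m b" "0 < i" "0 < m"
  shows "DesP a \<union> {i} \<union> (\<lambda>k. k + i) ` DesP b \<subseteq> DesP (map (\<lambda>x. x + m) a @ b)"
proof -
  have len: "length a = i" "length b = m" using assms by (auto simp: is_perm_def)
  have "i \<in> DesP (map (\<lambda>x. x + m) a @ b)"
    using shift_append_nth_less[OF assms(1,2), of i "Suc i"] assms(3,4) len
    by (simp add: DesP_def)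
  moreover have "DesP a \<subseteq> DesP (map (\<lambda>x. x + m) a @ b)"
    using len by (auto simp: DesP_def nth_append)
  moreover have "(\<lambda>k. k + i) ` DesP b \<subseteq> DesP (map (\<lambda>x. x + m) a @ b)"
    using len by (auto simp: DesP_def nth_append)
  ultimately show ?thesis by blast
qed

section \<open>Splitting and joining parking functions\<close>

lemma pdeg_lsplit_pf: "i \<le> pdeg f \<Longrightarrow> pdeg (lsplit_pf i f) = i"
  by (simp add: pdeg_def lsplit_pf_def deg_lsplit nleaves_eq_Suc_deg)

lemma pdeg_rsplit_pf: "i \<le> pdeg f \<Longrightarrow> pdeg (rsplit_pf i f) = pdeg f - i"
  by (simp add: pdeg_def rsplit_pf_def deg_rsplit nleaves_eq_Suc_deg)

lemma is_pf_lsplit_pf: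
  assumes "is_pf f" and "i \<le> pdeg f"
  shows "is_pf (lsplit_pf i f)"
proof -
  obtain s t where f: "f = (s, t)" by fastforce
  have s: "is_perm (deg t) s" and D: "DesT t \<subseteq> DesP s" and i: "i < nleaves t"
    using assms f by (auto simp: is_pf_def pdeg_def nleaves_eq_Suc_deg)
  have "is_perm i (std (take i s))"
    using is_perm_std[of "take i s"] s i by (simp add: is_perm_def nleaves_eq_Suc_deg)
  moreover have "DesT (lsplit i t) \<subseteq> DesP (std (take i s))"
    using DesT_lsplit[OF i] D by (auto simp: DesP_std DesP_take)
  ultimately show ?thesis using f i by (simp add: is_pf_def lsplit_pf_def deg_lsplit)
qed

lemma is_pf_rsplit_pf:
  assumes "is_pf f" and "i \<le> pdeg f"
  shows "is_pf (rsplit_pf i f)"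
proof -
  obtain s t where f: "f = (s, t)" by fastforce
  have s: "is_perm (deg t) s" and D: "DesT t \<subseteq> DesP s" and i: "i < nleaves t"
    using assms f by (auto simp: is_pf_def pdeg_def nleaves_eq_Suc_deg)
  have "is_perm (deg t - i) (std (drop i s))"
    using is_perm_std[of "drop i s"] s by (simp add: is_perm_def)
  moreover have "DesT (rsplit i t) \<subseteq> DesP (std (drop i s))"
  proof
    fix k assume k: "k \<in> DesT (rsplit i t)"
    then have "k + i \<in> DesP s" using DesT_rsplit[OF i] D by blast
    moreover have "1 \<le> k" using k by (simp add: DesT_def)
    ultimately show "k \<in> DesP (std (drop i s))" by (simp add: DesP_std DesP_drop)
  qed
  ultimately show ?thesis using f i by (simp add: is_pf_def rsplit_pf_def deg_rsplit)
qed

lemma split_pf_ends: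
  assumes "is_pf f"
  shows "lsplit_pf 0 f = unit_pf" "rsplit_pf 0 f = f"
    and "lsplit_pf (pdeg f) f = f" "rsplit_pf (pdeg f) f = unit_pf"
proof -
  obtain s t where f: "f = (s, t)" by fastforce
  have "is_perm (deg t) s" using assms f by (simp add: is_pf_def)
  then show "lsplit_pf 0 f = unit_pf" "rsplit_pf 0 f = f"
    and "lsplit_pf (pdeg f) f = f" "rsplit_pf (pdeg f) f = unit_pf"
    using f std_perm[of "deg t" s]
    by (simp_all add: is_perm_def lsplit_pf_def rsplit_pf_def unit_pf_def std_def pdeg_def
        lsplit_0 rsplit_0 lsplit_deg rsplit_deg)
qed

text \<open>The inverse of splitting at a global descent.\<close>

definition pf_join :: "pf \<Rightarrow> pf \<Rightarrow> pf" where
  "pf_join u v = (map (\<lambda>x. x + pdeg v) (fst u) @ fst v, graft (snd u) (snd v))"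

lemma pdeg_pf_join: "pdeg (pf_join u v) = pdeg u + pdeg v"
  by (simp add: pf_join_def pdeg_def deg_graft)

lemma pf_join_split_GD:
  assumes "is_pf g" and "i \<in> GD g"
  shows "pf_join (lsplit_pf i g) (rsplit_pf i g) = g"
proof -
  obtain s t where g: "g = (s, t)" by fastforce
  have s: "is_perm (deg t) s" using assms(1) g by (simp add: is_pf_def)
  have "i \<in> GDP s" and "i \<in> GDT t" using assms(2) g by (auto simp: GD_def)
  then obtain a b where t: "t = graft a b" "deg a = i" by (auto simp: GDT_def)
  have "lsplit i t = a" "rsplit i t = b"
    using t lsplit_graft[of a b] rsplit_graft[of a b] by simp_all
  moreover have "deg b = deg t - i" using t by (simp add: deg_graft)
  ultimately show ?thesis
    using GDP_decompose[OF s \<open>i \<in> GDP s\<close>] t g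
    by (simp add: pf_join_def lsplit_pf_def rsplit_pf_def pdeg_def)
qed

context
  fixes u v :: pf
  assumes u: "is_pf u" "0 < pdeg u" and v: "is_pf v" "0 < pdeg v"
begin

private lemma perm_u: "is_perm (pdeg u) (fst u)" and perm_v: "is_perm (pdeg v) (fst v)"
  using u v by (simp_all add: is_pf_def pdeg_def)

lemma is_pf_pf_join: "is_pf (pf_join u v)"
proof -
  have "DesT (graft (snd u) (snd v))
      \<subseteq> DesP (fst u) \<union> {pdeg u} \<union> (\<lambda>k. k + pdeg u) ` DesP (fst v)"
    using DesT_graft[of "snd u" "snd v"] u v by (auto simp: is_pf_def pdeg_def)
  also have "\<dots> \<subseteq> DesP (map (\<lambda>x. x + pdeg v) (fst u) @ fst v)"
    using DesP_shift_append[OF perm_u perm_v u(2) v(2)] .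
  finally show ?thesis
    using is_perm_shift_append[OF perm_u perm_v]
    by (simp add: is_pf_def pf_join_def deg_graft pdeg_def)
qed

lemma GD_pf_join: "pdeg u \<in> GD (pf_join u v)"
proof -
  have "pdeg u \<in> GDT (graft (snd u) (snd v))"
    using u(2) v(2) by (auto simp: GDT_def deg_graft pdeg_def)
  then show ?thesis
    using GDP_shift_append[OF perm_u perm_v u(2) v(2)] by (simp add: GD_def pf_join_def)
qed

lemma lsplit_pf_join: "lsplit_pf (pdeg u) (pf_join u v) = u"
  using perm_u std_shift[of "pdeg v" "fst u"] std_perm[OF perm_u]
  by (simp add: is_perm_def lsplit_pf_def pf_join_def lsplit_graft[of "snd u", unfolded pdeg_def[symmetric]])

lemma rsplit_pf_join: "rsplit_pf (pdeg u) (pf_join u v) = v"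
  using perm_u std_perm[OF perm_v]
  by (simp add: is_perm_def rsplit_pf_def pf_join_def rsplit_graft[of "snd u", unfolded pdeg_def[symmetric]])

end

section \<open>The parking order\<close>

definition up_set :: "pf \<Rightarrow> pf set" where
  "up_set f = {g. is_pf g \<and> park_le f g}"

lemma park_le_pdeg: "park_le f g \<Longrightarrow> pdeg f = pdeg g"
  by (simp add: park_le_def pdeg_def tamari_deg)

lemma park_le_refl: "park_le f f"
  by (simp add: park_le_def weak_le_def tamari_refl)

lemma park_le_trans: "park_le f g \<Longrightarrow> park_le g h \<Longrightarrow> park_le f h"
  unfolding park_le_def weak_le_def using tamari_trans by blast

lemma park_le_antisym:
  assumes "is_pf f" "is_pf g" "park_le f g" "park_le g f"
  shows "f = g"
proof -
  have "snd f = snd g" using assms tamari_antisym by (auto simp: park_le_def)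
  moreover have "Inv (fst f) = Inv (fst g)" using assms by (auto simp: park_le_def weak_le_def)
  ultimately show ?thesis
    using assms(1,2) perm_eq_if_Inv_eq by (metis is_pf_def prod_eqI)
qed

lemma finite_pf_pdeg: "finite {f. is_pf f \<and> pdeg f = n}"
proof (rule finite_subset)
  show "{f. is_pf f \<and> pdeg f = n} \<subseteq> {xs. set xs \<subseteq> {1..n} \<and> length xs = n} \<times> {t. deg t = n}"
    by (auto simp: is_pf_def pdeg_def is_perm_def)
  show "finite ({xs. set xs \<subseteq> {1..n} \<and> length xs = n} \<times> {t. deg t = n})"
    using finite_lists_length_eq[of "{1..n}" n] finite_deg_eq[of n] by blast
qed

lemma finite_up_set: "finite (up_set f)"
  by (rule finite_subset[OF _ finite_pf_pdeg[of "pdeg f"]]) (auto simp: up_set_def park_le_pdeg)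

lemma park_le_lsplit: "park_le f g \<Longrightarrow> park_le (lsplit_pf i f) (lsplit_pf i g)"
  by (auto simp: park_le_def weak_le_def lsplit_pf_def Inv_std Inv_take tamari_lsplit)

lemma park_le_rsplit: "park_le f g \<Longrightarrow> park_le (rsplit_pf i f) (rsplit_pf i g)"
  by (auto simp: park_le_def weak_le_def rsplit_pf_def Inv_std Inv_drop tamari_rsplit)

text \<open>On trees this rests on t lying below the graft of its two halves.\<close>

lemma park_le_if_split_GD:
  assumes f: "is_pf f" and g: "is_pf g" and "pdeg f = pdeg g" and i: "i \<in> GD g"
    and l: "park_le (lsplit_pf i f) (lsplit_pf i g)"
    and r: "park_le (rsplit_pf i f) (rsplit_pf i g)"
  shows "park_le f g"
proof -
  have "length (fst f) = length (fst g)"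
    using f g \<open>pdeg f = pdeg g\<close> by (simp add: is_pf_def is_perm_def pdeg_def)
  then have Inv: "Inv (fst f) \<subseteq> Inv (fst g)"
    using Inv_subset_if_GDP[of "fst f" "fst g" i] i l r
    by (simp add: GD_def park_le_def weak_le_def lsplit_pf_def rsplit_pf_def Inv_std)
  obtain a b where t: "snd g = graft a b" "deg a = i"
    using i by (auto simp: GD_def GDT_def)
  have "i < nleaves (snd f)"
    using i \<open>pdeg f = pdeg g\<close> by (auto simp: GD_def GDT_def nleaves_eq_Suc_deg pdeg_def)
  then have "tamari_le (snd f) (graft (lsplit i (snd f)) (rsplit i (snd f)))"
    by (rule tamari_graft_split)
  also have "tamari_le \<dots> (graft a b)"
    using l r t lsplit_graft[of a b] rsplit_graft[of a b]
    by (auto simp: park_le_def lsplit_pf_def rsplit_pf_def intro: tamari_graft)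
  finally show ?thesis using Inv t by (simp add: park_le_def weak_le_def)
qed

lemma bij_betw_split_up_set:
  assumes f: "is_pf f" and i: "0 < i" "i < pdeg f"
  shows "bij_betw (\<lambda>g. (lsplit_pf i g, rsplit_pf i g)) {g \<in> up_set f. i \<in> GD g}
           (up_set (lsplit_pf i f) \<times> up_set (rsplit_pf i f))"
proof (rule bij_betwI')
  fix x y assume x: "x \<in> {g \<in> up_set f. i \<in> GD g}" and y: "y \<in> {g \<in> up_set f. i \<in> GD g}"
  show "((lsplit_pf i x, rsplit_pf i x) = (lsplit_pf i y, rsplit_pf i y)) = (x = y)"
  proof
    assume "(lsplit_pf i x, rsplit_pf i x) = (lsplit_pf i y, rsplit_pf i y)"
    then have "pf_join (lsplit_pf i x) (rsplit_pf i x) = pf_join (lsplit_pf i y) (rsplit_pf i y)"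
      by simp
    then show "x = y" using x y by (simp add: up_set_def pf_join_split_GD)
  qed simp
next
  fix x assume "x \<in> {g \<in> up_set f. i \<in> GD g}"
  then have x: "is_pf x" "park_le f x" and "i \<le> pdeg x"
    using i park_le_pdeg[of f x] by (auto simp: up_set_def)
  then show "(lsplit_pf i x, rsplit_pf i x) \<in> up_set (lsplit_pf i f) \<times> up_set (rsplit_pf i f)"
    using is_pf_lsplit_pf[OF x(1)] is_pf_rsplit_pf[OF x(1)]
      park_le_lsplit[OF x(2)] park_le_rsplit[OF x(2)]
    by (simp add: up_set_def)
next
  fix y assume "y \<in> up_set (lsplit_pf i f) \<times> up_set (rsplit_pf i f)"
  then obtain u v where y: "y = (u, v)" and u: "is_pf u" "park_le (lsplit_pf i f) u"
    and v: "is_pf v" "park_le (rsplit_pf i f) v"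
    by (auto simp: up_set_def)
  have du: "pdeg u = i" and dv: "pdeg v = pdeg f - i"
    using park_le_pdeg[OF u(2)] park_le_pdeg[OF v(2)] i
    by (simp_all add: pdeg_lsplit_pf pdeg_rsplit_pf)
  then have pos: "0 < pdeg u" "0 < pdeg v" using i by simp_all
  note join = is_pf_pf_join[OF u(1) pos(1) v(1) pos(2)] GD_pf_join[OF u(1) pos(1) v(1) pos(2)]
    lsplit_pf_join[OF u(1) pos(1) v(1) pos(2)] rsplit_pf_join[OF u(1) pos(1) v(1) pos(2)]
  have "park_le f (pf_join u v)"
    using park_le_if_split_GD[OF f join(1) _ join(2)] join u v du dv i by (simp add: pdeg_pf_join)
  then show "\<exists>x \<in> {g \<in> up_set f. i \<in> GD g}. y = (lsplit_pf i x, rsplit_pf i x)"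
    using y join du by (intro bexI[of _ "pf_join u v"]) (simp_all add: up_set_def)
qed

section \<open>Moebius inversion and the monomial basis\<close>

lemma eq_if_upset_sums_eq:
  fixes x y :: "'a \<Rightarrow> 'b::ab_group_add"
  assumes fin: "\<And>f. f \<in> P \<Longrightarrow> finite (U f)"
    and self: "\<And>f. f \<in> P \<Longrightarrow> f \<in> U f"
    and mono: "\<And>f g. f \<in> P \<Longrightarrow> g \<in> U f \<Longrightarrow> g \<in> P \<and> U g \<subseteq> U f"
    and antisym: "\<And>f g. f \<in> P \<Longrightarrow> g \<in> U f \<Longrightarrow> f \<in> U g \<Longrightarrow> g = f"
    and sums: "\<And>f. f \<in> P \<Longrightarrow> sum x (U f) = sum y (U f)"
    and "f \<in> P"
  shows "x f = y f"
  using \<open>f \<in> P\<close>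
proof (induction "card (U f)" arbitrary: f rule: less_induct)
  case less
  have "x g = y g" if g: "g \<in> U f - {f}" for g
  proof -
    have "g \<in> P" and "U g \<subseteq> U f" and "f \<notin> U g"
      using mono[OF less(2)] antisym[OF less(2)] g by auto
    then have "card (U g) < card (U f)"
      using fin[OF less(2)] self[OF less(2)] by (intro psubset_card_mono) auto
    then show ?thesis using less(1) \<open>g \<in> P\<close> by blast
  qed
  then have "sum x (U f - {f}) = sum y (U f - {f})" by (rule sum.cong[OF refl])
  moreover have "sum x (U f) = x f + sum x (U f - {f})" "sum y (U f) = y f + sum y (U f - {f})"
    using fin[OF less(2)] self[OF less(2)] by (simp_all add: sum.remove)
  ultimately show ?case using sums[OF less(2)] by simp
qed

lemma pf_eq_if_up_set_sums_eq:
  fixes x y :: "pf \<Rightarrow> 'b::ab_group_add"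
  assumes "\<And>g. is_pf g \<Longrightarrow> pdeg g = pdeg f \<Longrightarrow> sum x (up_set g) = sum y (up_set g)"
    and "is_pf f"
  shows "x f = y f"
proof (rule eq_if_upset_sums_eq[where P = "{g. is_pf g \<and> pdeg g = pdeg f}" and U = up_set])
  fix g g' assume g: "g \<in> {g. is_pf g \<and> pdeg g = pdeg f}"
  show "finite (up_set g)" by (rule finite_up_set)
  show "g \<in> up_set g" using g park_le_refl by (simp add: up_set_def)
  show "g' \<in> {g. is_pf g \<and> pdeg g = pdeg f} \<and> up_set g' \<subseteq> up_set g" if "g' \<in> up_set g"
    using g that park_le_trans[of g g'] park_le_pdeg[of g g'] by (auto simp: up_set_def)
  show "g' = g" if "g' \<in> up_set g" "g \<in> up_set g'"
    using that park_le_antisym by (auto simp: up_set_def)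
  show "sum x (up_set g) = sum y (up_set g)" using g assms(1) by simp
qed (use assms(2) in simp)

lemma card_up_set_less: "is_pf f \<Longrightarrow> g \<in> up_set f - {f} \<Longrightarrow> card (up_set g) < card (up_set f)"
  using park_le_trans[of f g] park_le_antisym[of f g] park_le_refl[of f]
  by (intro psubset_card_mono finite_up_set) (auto simp: up_set_def)

text \<open>The triangular recursion M_f = F_f - (sum over g >_P f of M_g) exhibits the
  family described by Mb.\<close>

function mono_coeff :: "pf \<Rightarrow> pf \<Rightarrow> int" where
  "mono_coeff f h =
    (if is_pf f then Fb f h - (\<Sum>g \<in> up_set f - {f}. mono_coeff g h) else 0)"
  by auto
termination
  by (relation "measure (\<lambda>(f, h). card (up_set f))") (auto simp: card_up_set_less)

declare mono_coeff.simps [simp del]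

lemma Fb_eq_sum_mono_coeff: "is_pf f \<Longrightarrow> Fb f h = (\<Sum>g \<in> up_set f. mono_coeff g h)"
proof -
  assume f: "is_pf f"
  then have "f \<in> up_set f" by (simp add: up_set_def park_le_refl)
  then have "(\<Sum>g \<in> up_set f. mono_coeff g h) = mono_coeff f h + (\<Sum>g \<in> up_set f - {f}. mono_coeff g h)"
    using finite_up_set by (simp add: sum.remove)
  also have "\<dots> = Fb f h" using f by (subst mono_coeff.simps) simp
  finally show ?thesis by simp
qed

lemma Mb_eq_mono_coeff: "Mb = mono_coeff"
proof -
  have up_set_eq: "{g. is_pf g \<and> park_le f g} = up_set f" for f
    by (simp add: up_set_def)
  have zero: "mono_coeff f = (\<lambda>_. 0)" if "\<not> is_pf f" for f
    using that by (intro ext) (subst mono_coeff.simps, simp)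
  moreover have "Fb f = (\<lambda>h. \<Sum>g \<in> up_set f. mono_coeff g h)" if "is_pf f" for f
    using that by (simp add: Fb_eq_sum_mono_coeff fun_eq_iff)
  moreover have "M = mono_coeff"
    if M0: "\<forall>f. \<not> is_pf f \<longrightarrow> M f = (\<lambda>_. 0)"
      and MF: "\<forall>f. is_pf f \<longrightarrow> Fb f = (\<lambda>h. \<Sum>g \<in> up_set f. M g h)" for M
  proof (intro ext)
    fix f h
    have sums: "(\<Sum>g' \<in> up_set g. M g' h) = (\<Sum>g' \<in> up_set g. mono_coeff g' h)"
      if "is_pf g" for g
      using spec[OF MF, of g] Fb_eq_sum_mono_coeff[OF that, of h] that by simp
    show "M f h = mono_coeff f h"
    proof (cases "is_pf f")
      case True
      show ?thesis
        by (rule pf_eq_if_up_set_sums_eq[where x = "\<lambda>g. M g h", OF sums True])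
    qed (use spec[OF M0, of f] zero[of f] in simp)
  qed
  ultimately show ?thesis
    unfolding Mb_def up_set_eq by (intro the_equality) blast+
qed

lemma Fb_eq_sum_Mb: "is_pf f \<Longrightarrow> Fb f h = (\<Sum>g \<in> up_set f. Mb g h)"
  by (simp add: Mb_eq_mono_coeff Fb_eq_sum_mono_coeff)

section \<open>The coproduct\<close>

lemma Delta_sum: "finite A \<Longrightarrow> Delta (\<lambda>q. \<Sum>a\<in>A. X a q) p = (\<Sum>a\<in>A. Delta (X a) p)"
  by (cases p) (simp add: Delta_def sum_distrib_right sum.swap[of _ A])

lemma tensor_sum_left: "tensor (\<lambda>q. \<Sum>a\<in>A. X a q) y p = (\<Sum>a\<in>A. tensor (X a) y p)"
  by (cases p) (simp add: tensor_def sum_distrib_right)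

lemma tensor_sum_right: "tensor y (\<lambda>q. \<Sum>a\<in>A. X a q) p = (\<Sum>a\<in>A. tensor y (X a) p)"
  by (cases p) (simp add: tensor_def sum_distrib_left)

lemma Delta_plus_sum:
  "finite A \<Longrightarrow> Delta_plus (\<lambda>q. \<Sum>a\<in>A. X a q) p = (\<Sum>a\<in>A. Delta_plus (X a) p)"
  by (simp add: Delta_plus_def Delta_sum tensor_sum_left tensor_sum_right sum_subtractf)

lemma Delta_Fb:
  assumes "is_pf f"
  shows "Delta (Fb f) (a, b) = int (card {i. i \<le> pdeg f \<and> lsplit_pf i f = a \<and> rsplit_pf i f = b})"
proof -
  let ?S = "{f. is_pf f \<and> pdeg f = pdeg a + pdeg b}"
  let ?c = "\<lambda>f. int (card {i. i \<le> pdeg f \<and> lsplit_pf i f = a \<and> rsplit_pf i f = b})"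
  have "Delta (Fb f) (a, b) = (\<Sum>f' \<in> ?S. if f' = f then ?c f' else 0)"
    unfolding Delta_def Fb_def by (auto intro!: sum.cong)
  also have "\<dots> = (if f \<in> ?S then ?c f else 0)"
    using finite_pf_pdeg by (simp add: sum.delta)
  finally have "Delta (Fb f) (a, b) = (if f \<in> ?S then ?c f else 0)" .
  moreover have "?c f = 0" if "f \<notin> ?S"
  proof -
    have "pdeg a + pdeg b \<noteq> pdeg f" using that assms by simp
    then have "{i. i \<le> pdeg f \<and> lsplit_pf i f = a \<and> rsplit_pf i f = b} = {}"
      by (auto simp: pdeg_lsplit_pf pdeg_rsplit_pf)
    then show ?thesis by simp
  qed
  ultimately show ?thesis by auto
qed

lemma Delta_plus_Fb:
  assumes f: "is_pf f" and "0 < pdeg f"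
  shows "Delta_plus (Fb f) (a, b) =
    (\<Sum>i \<in> {1..pdeg f - 1}. if lsplit_pf i f = a \<and> rsplit_pf i f = b then 1 else 0)"
proof -
  let ?n = "pdeg f" and ?Q = "\<lambda>i. lsplit_pf i f = a \<and> rsplit_pf i f = b"
  let ?ind = "\<lambda>i. if ?Q i then 1 else 0 :: int"
  have "Delta (Fb f) (a, b) = sum ?ind {i. i \<le> ?n}"
    using Delta_Fb[OF f] by (simp add: sum.If_cases Int_def conj_commute)
  also have "{i. i \<le> ?n} = insert 0 (insert ?n {1..?n - 1})" using \<open>0 < pdeg f\<close> by auto
  finally have "Delta (Fb f) (a, b) = ?ind 0 + ?ind ?n + sum ?ind {1..?n - 1}"
    using \<open>0 < pdeg f\<close> by simp
  moreover have "f \<noteq> unit_pf" using \<open>0 < pdeg f\<close> by (auto simp: unit_pf_def pdeg_def)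
  ultimately show ?thesis
    using split_pf_ends[OF f] by (auto simp: Delta_plus_def tensor_def Fb_def)
qed

lemma sum_up_set_Delta_plus_Mb:
  assumes "is_pf f"
  shows "(\<Sum>g \<in> up_set f. Delta_plus (Mb g) p) = Delta_plus (Fb f) p"
proof -
  have "Fb f = (\<lambda>q. \<Sum>g \<in> up_set f. Mb g q)"
    using assms by (simp add: Fb_eq_sum_Mb fun_eq_iff)
  then show ?thesis using Delta_plus_sum[OF finite_up_set, of Mb f p] by simp
qed

lemma sum_up_set_GD_split:
  assumes f: "is_pf f" and i: "0 < i" "i < pdeg f"
  shows "(\<Sum>g \<in> {g \<in> up_set f. i \<in> GD g}. Mb (lsplit_pf i g) a * Mb (rsplit_pf i g) b)
    = Fb (lsplit_pf i f) a * Fb (rsplit_pf i f) b"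
proof -
  have "(\<Sum>g \<in> {g \<in> up_set f. i \<in> GD g}. Mb (lsplit_pf i g) a * Mb (rsplit_pf i g) b)
      = (\<Sum>(u, v) \<in> up_set (lsplit_pf i f) \<times> up_set (rsplit_pf i f). Mb u a * Mb v b)"
    using sum.reindex_bij_betw[OF bij_betw_split_up_set[OF f i], of "\<lambda>(u, v). Mb u a * Mb v b"]
    by simp
  also have "\<dots> = (\<Sum>u \<in> up_set (lsplit_pf i f). Mb u a) * (\<Sum>v \<in> up_set (rsplit_pf i f). Mb v b)"
    by (simp add: sum_product sum.cartesian_product)
  also have "\<dots> = Fb (lsplit_pf i f) a * Fb (rsplit_pf i f) b"
    using f i by (simp add: Fb_eq_sum_Mb is_pf_lsplit_pf is_pf_rsplit_pf)
  finally show ?thesis .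
qed

lemma GD_subset: "is_pf g \<Longrightarrow> GD g \<subseteq> {1..pdeg g - 1}"
  by (auto simp: GD_def GDP_def is_pf_def is_perm_def pdeg_def)

lemma sum_up_set_GD_tensor_Mb:
  assumes f: "is_pf f" and "0 < pdeg f"
  shows "(\<Sum>g \<in> up_set f. \<Sum>i \<in> GD g. tensor (Mb (lsplit_pf i g)) (Mb (rsplit_pf i g)) (a, b))
    = Delta_plus (Fb f) (a, b)"
proof -
  let ?I = "{1..pdeg f - 1}"
  let ?T = "\<lambda>g i. Mb (lsplit_pf i g) a * Mb (rsplit_pf i g) b"
  have restrict: "(\<Sum>i \<in> GD g. ?T g i) = (\<Sum>i \<in> ?I. if i \<in> GD g then ?T g i else 0)"
    if "g \<in> up_set f" for g
  proof -
    have "is_pf g" "pdeg g = pdeg f" using that park_le_pdeg[of f g] by (auto simp: up_set_def)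
    then have "?I \<inter> GD g = GD g" using GD_subset[of g] by auto
    then show ?thesis using sum.inter_restrict[of ?I "?T g" "GD g"] by simp
  qed
  have "(\<Sum>g \<in> up_set f. \<Sum>i \<in> GD g. tensor (Mb (lsplit_pf i g)) (Mb (rsplit_pf i g)) (a, b))
      = (\<Sum>g \<in> up_set f. \<Sum>i \<in> ?I. if i \<in> GD g then ?T g i else 0)"
    using restrict by (simp add: tensor_def)
  also have "\<dots> = (\<Sum>i \<in> ?I. \<Sum>g \<in> up_set f. if i \<in> GD g then ?T g i else 0)"
    by (rule sum.swap)
  also have "\<dots> = (\<Sum>i \<in> ?I. Fb (lsplit_pf i f) a * Fb (rsplit_pf i f) b)"
  proof (rule sum.cong[OF refl])
    fix i assume "i \<in> ?I"
    then have "0 < i" "i < pdeg f" by auto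
    then show "(\<Sum>g \<in> up_set f. if i \<in> GD g then ?T g i else 0)
        = Fb (lsplit_pf i f) a * Fb (rsplit_pf i f) b"
      using sum_up_set_GD_split[OF f] finite_up_set by (simp add: sum.inter_filter[symmetric])
  qed
  also have "\<dots> = (\<Sum>i \<in> ?I. if lsplit_pf i f = a \<and> rsplit_pf i f = b then 1 else 0)"
    by (intro sum.cong) (auto simp: Fb_def)
  also have "\<dots> = Delta_plus (Fb f) (a, b)"
    using Delta_plus_Fb[OF assms] by simp
  finally show ?thesis .
qed

theorem mainTheorem19:
  fixes f :: pf
  assumes "is_pf f" and "pdeg f > 0"
  shows "Delta_plus (Mb f) =
    (\<lambda>p. \<Sum>i \<in> GD f. tensor (Mb (lsplit_pf i f)) (Mb (rsplit_pf i f)) p)"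
proof (rule ext)
  fix p :: "pf \<times> pf"
  obtain a b where p: "p = (a, b)" by (cases p)
  have "Delta_plus (Mb f) (a, b) =
    (\<Sum>i \<in> GD f. tensor (Mb (lsplit_pf i f)) (Mb (rsplit_pf i f)) (a, b))"
  proof (rule pf_eq_if_up_set_sums_eq[where x = "\<lambda>g. Delta_plus (Mb g) (a, b)"])
    fix g assume "is_pf g" and "pdeg g = pdeg f"
    then show "(\<Sum>g' \<in> up_set g. Delta_plus (Mb g') (a, b)) =
        (\<Sum>g' \<in> up_set g. \<Sum>i \<in> GD g'. tensor (Mb (lsplit_pf i g')) (Mb (rsplit_pf i g')) (a, b))"
      using assms(2) by (simp add: sum_up_set_Delta_plus_Mb sum_up_set_GD_tensor_Mb)
  qed (rule assms(1))
  then show "Delta_plus (Mb f) p =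
      (\<Sum>i \<in> GD f. tensor (Mb (lsplit_pf i f)) (Mb (rsplit_pf i f)) p)"
    using p by simp
qed

end
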